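(* Let $p\ge1$, $m\in\mathbb{N}$, $a,b>0$, $\beta\in\mathbb{R}^p$, let $\xi_1,\ldots,\xi_r$ be designs on $\mathcal{X}$ and $q_1,\ldots,q_r\in[0,1]$ with $\sum_{i=1}^r q_i=1$, and let $\zeta$ be the population design assigning weight $q_i$ to $\xi_i$, with information matrix $M(\zeta;\beta)=\sum_{i=1}^r q_iM(\xi_i;\beta)$. Let $\xi=\sum_{i=1}^r q_i\xi_i$ (the mixture of the probability measures $\xi_i$) and let $\tilde\zeta$ be the population design assigning weight 1 to $\xi$, so $M(\tilde\zeta;\beta)=M(\xi;\beta)$. Then $M(\tilde\zeta;\beta)\ge M(\zeta;\beta)$ in the Loewner order. Consequently, for every isotonic criterion function $\Phi$ (i.e. $\Phi(M_1)\ge\Phi(M_2)$ whenever $M_1\ge M_2$ are positive semidefinite), $\Phi(M(\tilde\zeta;\beta))\ge\Phi(M(\zeta;\beta))$.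
   Context: Let $\mathcal{X}\subseteq\mathbb{R}^k$ be a design region and $f=(1,f_1,\ldots,f_{p-1})^T:\mathcal{X}\to\mathbb{R}^p$ a vector of regression functions whose first component is the constant 1. A design $\xi$ is a probability measure on $\mathcal{X}$ with finite support $x_1,\ldots,x_l$ and weights $w_1,\ldots,w_l\ge0$, $\sum_j w_j=1$. The Poisson information matrix is $M_{Po}(\xi;\beta)=\sum_{j=1}^l w_j\exp(f(x_j)^T\beta)f(x_j)f(x_j)^T$, and the Poisson–Gamma information matrix is $M(\xi;\beta)=\frac{a}{b}\Bigl(M_{Po}(\xi;\beta)-\frac{M_{Po}(\xi;\beta)e_1e_1^TM_{Po}(\xi;\beta)}{e_1^TM_{Po}(\xi;\beta)e_1+b/m}\Bigr)$, where $e_1$ is the first standard unit vector of $\mathbb{R}^p$. The Loewner order is $M_1\ge M_2$ iff $M_1-M_2$ is positive semidefinite. *)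

theory Defs
  imports "HOL-Analysis.Analysis"
begin

text \<open>Coordinates of R^p are indexed by a finite type 'p; a distinguished index i0
  plays the role of the first coordinate, e_1 = axis i0 1.\<close>

definition outer :: "real^'p \<Rightarrow> real^'p \<Rightarrow> real^'p^'p" where
  "outer u v = (\<chi> i j. u $ i * v $ j)"

definition supp_design :: "('a \<Rightarrow> real) \<Rightarrow> 'a set" where
  "supp_design w = {x. w x \<noteq> 0}"

definition is_design :: "'a set \<Rightarrow> ('a \<Rightarrow> real) \<Rightarrow> bool" where
  "is_design X w \<longleftrightarrow> (\<forall>x. 0 \<le> w x) \<and> finite (supp_design w) \<and> supp_design w \<subseteq> X
     \<and> (\<Sum>x\<in>supp_design w. w x) = 1"

definition M_Po :: "('a \<Rightarrow> real^'p) \<Rightarrow> real^'p \<Rightarrow> ('a \<Rightarrow> real) \<Rightarrow> real^'p^'p" where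
  "M_Po f \<beta> w = (\<Sum>x\<in>supp_design w. (w x * exp (f x \<bullet> \<beta>)) *\<^sub>R outer (f x) (f x))"

definition M_PG :: "real \<Rightarrow> real \<Rightarrow> nat \<Rightarrow> 'p \<Rightarrow> ('a \<Rightarrow> real^'p) \<Rightarrow> real^'p
     \<Rightarrow> ('a \<Rightarrow> real) \<Rightarrow> real^'p^'p" where
  "M_PG a b m i0 f \<beta> w =
     (let P = M_Po f \<beta> w; e = axis i0 (1::real)
      in (a / b) *\<^sub>R (P - (1 / (e \<bullet> (P *v e) + b / real m)) *\<^sub>R (P ** outer e e ** P)))"

definition psd :: "real^'p^'p \<Rightarrow> bool" where
  "psd A \<longleftrightarrow> transpose A = A \<and> (\<forall>x. 0 \<le> x \<bullet> (A *v x))"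

definition loewner_ge :: "real^'p^'p \<Rightarrow> real^'p^'p \<Rightarrow> bool" where
  "loewner_ge A B \<longleftrightarrow> psd (A - B)"

definition isotonic :: "(real^'p^'p \<Rightarrow> real) \<Rightarrow> bool" where
  "isotonic \<Phi> \<longleftrightarrow> (\<forall>M1 M2. psd M1 \<and> psd M2 \<and> loewner_ge M1 M2 \<longrightarrow> \<Phi> M2 \<le> \<Phi> M1)"

end

theory Submission
  imports Defs
begin

(* With P = M_Po(xi) and c = b/m, the Poisson-Gamma matrix is (a/b) times a Schur complement
   whose quadratic form is x |-> min_t (x - t e_1)^T P (x - t e_1) + c t^2.  As a minimum of
   functions linear in P it is concave in P, and P is linear in the design, so the matrix of
   the mixture dominates the mixture of the matrices. *)

lemma transpose_zero [simp]: "transpose 0 = 0"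
  by (simp add: transpose_def vec_eq_iff)

lemma transpose_add: "transpose (A + B) = transpose A + transpose (B :: 'a::semiring_1^'n^'m)"
  by (simp add: transpose_def vec_eq_iff)

lemma transpose_diff: "transpose (A - B) = transpose A - transpose (B :: 'a::ring_1^'n^'m)"
  by (simp add: transpose_def vec_eq_iff)

lemma transpose_sum: "transpose (\<Sum>i\<in>I. A i) = (\<Sum>i\<in>I. transpose (A i :: 'a::semiring_1^'n^'m))"
  by (induction I rule: infinite_finite_induct) (simp_all add: transpose_add)

lemma sum_matrix_vector_mult: "(\<Sum>i\<in>I. A i) *v x = (\<Sum>i\<in>I. A i *v (x :: 'a::semiring_1^'n))"
  by (induction I rule: infinite_finite_induct) (simp_all add: matrix_vector_mult_add_rdistrib)

lemma inner_symmetric_matrix: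
  fixes P :: "real^'n^'n"
  assumes "transpose P = P"
  shows "x \<bullet> (P *v y) = y \<bullet> (P *v x)"
  by (metis assms dot_lmul_matrix inner_commute transpose_matrix_vector)

lemma outer_mult_vec: "outer u v *v z = (v \<bullet> z) *\<^sub>R u"
  by (simp add: outer_def matrix_vector_mult_def vec_eq_iff inner_vec_def sum_distrib_left mult_ac)

lemma transpose_outer_self: "transpose (outer u u) = outer u u"
  by (simp add: transpose_def outer_def vec_eq_iff mult.commute)

lemma psd_zero: "psd 0"
  by (simp add: psd_def)

lemma psd_add: "psd A \<Longrightarrow> psd B \<Longrightarrow> psd (A + B)"
  by (simp add: psd_def transpose_add matrix_vector_mult_add_rdistrib inner_add_right add_nonneg_nonneg)

lemma psd_scaleR: "psd A \<Longrightarrow> 0 \<le> c \<Longrightarrow> psd (c *\<^sub>R A)"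
  by (simp add: psd_def transpose_scalar flip: scaleR_matrix_vector_assoc)

lemma psd_sum: "(\<And>i. i \<in> I \<Longrightarrow> psd (A i)) \<Longrightarrow> psd (\<Sum>i\<in>I. A i)"
  by (induction I rule: infinite_finite_induct) (simp_all add: psd_zero psd_add)

lemma psd_outer_self: "psd (outer u u)"
  by (simp add: psd_def transpose_outer_self outer_mult_vec inner_commute)

lemma loewner_ge_scaleR: "loewner_ge A B \<Longrightarrow> 0 \<le> c \<Longrightarrow> loewner_ge (c *\<^sub>R A) (c *\<^sub>R B)"
  unfolding loewner_ge_def by (metis psd_scaleR scaleR_right_diff_distrib)

lemma completing_square_le:
  fixes D u t :: real
  assumes "0 < D"
  shows "- u\<^sup>2 / D \<le> t\<^sup>2 * D - 2 * t * u"
proof -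
  have "t\<^sup>2 * D - 2 * t * u - (- u\<^sup>2 / D) = (t * D - u)\<^sup>2 / D"
    using assms by (simp add: field_simps power2_eq_square)
  also have "\<dots> \<ge> 0"
    using assms by simp
  finally show ?thesis by simp
qed

lemma completing_square_eq:
  fixes D u :: real
  assumes "0 < D"
  shows "- u\<^sup>2 / D = (u / D)\<^sup>2 * D - 2 * (u / D) * u"
  using assms by (simp add: field_simps power2_eq_square)

(* The Schur complement of the corner entry of the bordered matrix
   [[P, P e], [e^T P, e^T P e + c]]. *)
definition schur_compl :: "real^'n^'n \<Rightarrow> real^'n \<Rightarrow> real \<Rightarrow> real^'n^'n" where
  "schur_compl P e c = P - (1 / (e \<bullet> (P *v e) + c)) *\<^sub>R (P ** outer e e ** P)"

lemma transpose_schur_compl: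
  "transpose P = P \<Longrightarrow> transpose (schur_compl P e c) = schur_compl P e c"
  by (simp add: schur_compl_def transpose_diff transpose_scalar matrix_transpose_mul
      transpose_outer_self matrix_mul_assoc)

lemma quadratic_form_shift:
  fixes P :: "real^'n^'n"
  assumes "transpose P = P"
  shows "(x - t *\<^sub>R e) \<bullet> (P *v (x - t *\<^sub>R e))
           = x \<bullet> (P *v x) - 2 * t * (e \<bullet> (P *v x)) + t\<^sup>2 * (e \<bullet> (P *v e))"
  using inner_symmetric_matrix[OF assms, of x e]
  by (simp add: matrix_vector_mult_diff_distrib matrix_vector_mult_scaleR inner_diff
      algebra_simps power2_eq_square)

lemma schur_compl_quadratic_form:
  fixes P :: "real^'n^'n"
  assumes "transpose P = P"
  shows "x \<bullet> (schur_compl P e c *v x)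
           = x \<bullet> (P *v x) - (e \<bullet> (P *v x))\<^sup>2 / (e \<bullet> (P *v e) + c)"
  using inner_symmetric_matrix[OF assms, of x e]
  by (simp add: schur_compl_def matrix_vector_mult_diff_rdistrib outer_mult_vec
      matrix_vector_mult_scaleR inner_diff_right power2_eq_square
      flip: scaleR_matrix_vector_assoc matrix_vector_mul_assoc)

lemma schur_compl_quadratic_form_le:
  fixes P :: "real^'n^'n"
  assumes "transpose P = P" "0 < e \<bullet> (P *v e) + c"
  shows "x \<bullet> (schur_compl P e c *v x) \<le> (x - t *\<^sub>R e) \<bullet> (P *v (x - t *\<^sub>R e)) + c * t\<^sup>2"
  using completing_square_le[OF assms(2), of "e \<bullet> (P *v x)" t]
  unfolding schur_compl_quadratic_form[OF assms(1)] quadratic_form_shift[OF assms(1)]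
  by (simp add: algebra_simps)

lemma schur_compl_quadratic_form_attained:
  fixes P :: "real^'n^'n"
  assumes "transpose P = P" "0 < e \<bullet> (P *v e) + c"
  obtains t where "x \<bullet> (schur_compl P e c *v x) = (x - t *\<^sub>R e) \<bullet> (P *v (x - t *\<^sub>R e)) + c * t\<^sup>2"
proof (rule that)
  let ?t = "(e \<bullet> (P *v x)) / (e \<bullet> (P *v e) + c)"
  show "x \<bullet> (schur_compl P e c *v x) = (x - ?t *\<^sub>R e) \<bullet> (P *v (x - ?t *\<^sub>R e)) + c * ?t\<^sup>2"
    using completing_square_eq[OF assms(2), of "e \<bullet> (P *v x)"]
    unfolding schur_compl_quadratic_form[OF assms(1)] quadratic_form_shift[OF assms(1)]
    by (simp add: algebra_simps)
qed

lemma psd_schur_compl: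
  assumes "psd P" "0 < c"
  shows "psd (schur_compl P e c)"
  unfolding psd_def
proof (intro conjI allI)
  have sym: "transpose P = P" and nonneg: "\<And>y. 0 \<le> y \<bullet> (P *v y)"
    using assms(1) by (auto simp: psd_def)
  show "transpose (schur_compl P e c) = schur_compl P e c"
    using transpose_schur_compl[OF sym] .
  fix x
  have "0 < e \<bullet> (P *v e) + c"
    using nonneg[of e] assms(2) by linarith
  then obtain t where "x \<bullet> (schur_compl P e c *v x) = (x - t *\<^sub>R e) \<bullet> (P *v (x - t *\<^sub>R e)) + c * t\<^sup>2"
    using schur_compl_quadratic_form_attained[OF sym] by blast
  then show "0 \<le> x \<bullet> (schur_compl P e c *v x)"
    using nonneg[of "x - t *\<^sub>R e"] assms(2) by simp
qed

(* Evaluate the mixture at its own minimiser t: there the objective splits as the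
   q-average of the individual objectives, each of which dominates its own minimum. *)
lemma schur_compl_concave:
  assumes psd: "\<And>i. i \<in> I \<Longrightarrow> psd (P i)"
    and q_nonneg: "\<And>i. i \<in> I \<Longrightarrow> 0 \<le> q i" and q_sum: "sum q I = 1"
    and c_pos: "0 < c"
  shows "loewner_ge (schur_compl (\<Sum>i\<in>I. q i *\<^sub>R P i) e c) (\<Sum>i\<in>I. q i *\<^sub>R schur_compl (P i) e c)"
  unfolding loewner_ge_def psd_def
proof (intro conjI allI)
  let ?P = "\<Sum>i\<in>I. q i *\<^sub>R P i"
  have sym: "transpose (P i) = P i" and nonneg: "0 \<le> e \<bullet> (P i *v e)" if "i \<in> I" for i
    using psd[OF that] by (auto simp: psd_def)
  have "psd ?P"
    using psd q_nonneg by (simp add: psd_sum psd_scaleR)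
  then have sym_mix: "transpose ?P = ?P" and "0 < e \<bullet> (?P *v e) + c"
    using c_pos by (auto simp: psd_def intro: add_nonneg_pos)
  show "transpose (schur_compl ?P e c - (\<Sum>i\<in>I. q i *\<^sub>R schur_compl (P i) e c))
          = schur_compl ?P e c - (\<Sum>i\<in>I. q i *\<^sub>R schur_compl (P i) e c)"
    by (simp add: transpose_diff transpose_sum transpose_scalar transpose_schur_compl sym sym_mix)
  fix x
  obtain t where t: "x \<bullet> (schur_compl ?P e c *v x) = (x - t *\<^sub>R e) \<bullet> (?P *v (x - t *\<^sub>R e)) + c * t\<^sup>2"
    using schur_compl_quadratic_form_attained[OF sym_mix \<open>0 < e \<bullet> (?P *v e) + c\<close>] by blast
  have "x \<bullet> ((\<Sum>i\<in>I. q i *\<^sub>R schur_compl (P i) e c) *v x)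
          = (\<Sum>i\<in>I. q i * (x \<bullet> (schur_compl (P i) e c *v x)))"
    by (simp add: sum_matrix_vector_mult inner_sum_right flip: scaleR_matrix_vector_assoc)
  also have "\<dots> \<le> (\<Sum>i\<in>I. q i * ((x - t *\<^sub>R e) \<bullet> (P i *v (x - t *\<^sub>R e)) + c * t\<^sup>2))"
  proof (rule sum_mono, rule mult_left_mono)
    fix i assume "i \<in> I"
    show "x \<bullet> (schur_compl (P i) e c *v x) \<le> (x - t *\<^sub>R e) \<bullet> (P i *v (x - t *\<^sub>R e)) + c * t\<^sup>2"
      using schur_compl_quadratic_form_le[OF sym] nonneg c_pos \<open>i \<in> I\<close> by (simp add: add_nonneg_pos)
    show "0 \<le> q i"
      using q_nonneg \<open>i \<in> I\<close> .
  qed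
  also have "\<dots> = x \<bullet> (schur_compl ?P e c *v x)"
    unfolding t using q_sum
    by (simp add: sum_matrix_vector_mult inner_sum_right distrib_left sum.distrib
        flip: scaleR_matrix_vector_assoc sum_distrib_right)
  finally show "0 \<le> x \<bullet> ((schur_compl ?P e c - (\<Sum>i\<in>I. q i *\<^sub>R schur_compl (P i) e c)) *v x)"
    by (simp add: matrix_vector_mult_diff_rdistrib inner_diff_right)
qed

lemma M_Po_eq_sum_superset:
  assumes "finite S" "supp_design w \<subseteq> S"
  shows "M_Po f \<beta> w = (\<Sum>x\<in>S. (w x * exp (f x \<bullet> \<beta>)) *\<^sub>R outer (f x) (f x))"
  unfolding M_Po_def
  by (rule sum.mono_neutral_left) (use assms in \<open>auto simp: supp_design_def\<close>)

lemma M_Po_mixture: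
  assumes "finite I" "\<And>i. i \<in> I \<Longrightarrow> finite (supp_design (\<xi> i))"
  shows "M_Po f \<beta> (\<lambda>x. \<Sum>i\<in>I. q i * \<xi> i x) = (\<Sum>i\<in>I. q i *\<^sub>R M_Po f \<beta> (\<xi> i))"
proof -
  define S where "S = (\<Union>i\<in>I. supp_design (\<xi> i))"
  have "finite S"
    using assms by (simp add: S_def)
  moreover have "supp_design (\<xi> i) \<subseteq> S" if "i \<in> I" for i
    using that by (auto simp: S_def)
  moreover have "supp_design (\<lambda>x. \<Sum>i\<in>I. q i * \<xi> i x) \<subseteq> S"
    by (auto simp: S_def supp_design_def intro: ccontr)
  ultimately show ?thesis
    by (simp add: M_Po_eq_sum_superset scaleR_sum_right sum_distrib_right scaleR_sum_left mult.assoc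
        flip: sum.swap[of _ S I])
qed

lemma psd_M_Po: "(\<And>x. 0 \<le> w x) \<Longrightarrow> psd (M_Po f \<beta> w)"
  unfolding M_Po_def by (simp add: psd_sum psd_scaleR psd_outer_self)

lemma M_PG_eq_schur_compl:
  "M_PG a b m i0 f \<beta> w = (a / b) *\<^sub>R schur_compl (M_Po f \<beta> w) (axis i0 1) (b / real m)"
  by (simp add: M_PG_def schur_compl_def Let_def)

theorem corollary1:
  fixes X :: "(real^'k) set" and f :: "real^'k \<Rightarrow> real^'p" and i0 :: 'p
    and a b :: real and m :: nat and \<beta> :: "real^'p"
    and r :: nat and \<xi> :: "nat \<Rightarrow> real^'k \<Rightarrow> real" and q :: "nat \<Rightarrow> real"
  assumes f_first: "\<forall>x\<in>X. f x $ i0 = 1"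
    and m_pos: "0 < m" and a_pos: "0 < a" and b_pos: "0 < b"
    and designs: "\<forall>i<r. is_design X (\<xi> i)"
    and q_range: "\<forall>i<r. 0 \<le> q i \<and> q i \<le> 1"
    and q_sum: "(\<Sum>i<r. q i) = 1"
  shows "loewner_ge (M_PG a b m i0 f \<beta> (\<lambda>x. \<Sum>i<r. q i * \<xi> i x))
                    (\<Sum>i<r. q i *\<^sub>R M_PG a b m i0 f \<beta> (\<xi> i))
       \<and> (\<forall>\<Phi>. isotonic \<Phi> \<longrightarrow>
            \<Phi> (\<Sum>i<r. q i *\<^sub>R M_PG a b m i0 f \<beta> (\<xi> i))
              \<le> \<Phi> (M_PG a b m i0 f \<beta> (\<lambda>x. \<Sum>i<r. q i * \<xi> i x)))"
proof -
  have c_pos: "0 < b / real m" and ab: "0 \<le> a / b"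
    using m_pos a_pos b_pos by simp_all
  have q_nonneg: "\<And>i. i < r \<Longrightarrow> 0 \<le> q i"
    using q_range by simp
  have \<xi>_nonneg: "\<And>i x. i < r \<Longrightarrow> 0 \<le> \<xi> i x"
    and \<xi>_finite: "\<And>i. i < r \<Longrightarrow> finite (supp_design (\<xi> i))"
    using designs by (simp_all add: is_design_def)
  have psd_Po: "\<And>i. i < r \<Longrightarrow> psd (M_Po f \<beta> (\<xi> i))"
    using \<xi>_nonneg by (simp add: psd_M_Po)
  have mixture: "M_Po f \<beta> (\<lambda>x. \<Sum>i<r. q i * \<xi> i x) = (\<Sum>i<r. q i *\<^sub>R M_Po f \<beta> (\<xi> i))"
    by (rule M_Po_mixture) (simp_all add: \<xi>_finite)
  have ge: "loewner_ge (M_PG a b m i0 f \<beta> (\<lambda>x. \<Sum>i<r. q i * \<xi> i x))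
                       (\<Sum>i<r. q i *\<^sub>R M_PG a b m i0 f \<beta> (\<xi> i))"
    unfolding M_PG_eq_schur_compl mixture scaleR_left_commute[of "q _" "a / b"]
      scaleR_sum_right[symmetric]
    using schur_compl_concave[of "{..<r}", OF psd_Po q_nonneg q_sum c_pos] ab
    by (simp add: loewner_ge_scaleR)
  have "psd (M_PG a b m i0 f \<beta> (\<lambda>x. \<Sum>i<r. q i * \<xi> i x))"
    unfolding M_PG_eq_schur_compl mixture
    by (intro psd_scaleR psd_schur_compl psd_sum ab c_pos) (simp_all add: psd_Po q_nonneg)
  moreover have "psd (\<Sum>i<r. q i *\<^sub>R M_PG a b m i0 f \<beta> (\<xi> i))"
    unfolding M_PG_eq_schur_compl
    by (intro psd_scaleR psd_schur_compl psd_sum ab c_pos) (simp_all add: psd_Po q_nonneg)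
  ultimately show ?thesis
    using ge unfolding isotonic_def by blast
qed

end
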